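(* For all functions $s,f,g,t$ of the input length $n$, $$\mathrm{IP}(O(s(n))\ \mathrm{space},\ O(f(n))\ \mathrm{private\ random\ bits},\ O(g(n))\ \mathrm{public\ random\ bits},\ O(t(n))\ \mathrm{time})\subseteq \mathrm{IP}(O(s(n))\ \mathrm{space},\ O(f(n)+g(n))\ \mathrm{private\ random\ bits},\ O(t(n))\ \mathrm{time}).$$ This inclusion also holds when both classes are replaced by their $\mathrm{IP}^{\mathrm{high}}$ variants, and when the worst-case bounds are replaced by bounds on expected usage.
   Context: Interactive proof systems. A verifier is a probabilistic Turing machine with a read-only input tape containing $\rhd w\lhd$, a read-write work tape, and a read-write communication cell shared with a prover. Its states may flip private coins (fair random bits hidden from the prover), flip public coins (fair random bits revealed to the prover; public-coin states are communication states), and/or write to the communication cell. In each step, based on the state, the scanned input, work and communication symbols and the coin outcomes, it changes state, writes on the work tape, writes to the communication cell (if in a communication state), and moves its heads. Each time the verifier writes to the communication cell, the prover overwrites it with a symbol that is an arbitrary function of $w$, the history of public coin outcomes, and the communication symbols so far; the prover does not see private coins or the verifier's internal configuration. The verifier halts on entering accept/reject; it may run forever. $V$ verifies $L$ with error $\varepsilon=\max(\varepsilon^+,\varepsilon^-)$, $\varepsilon^\pm<1/2$, if some prover makes $V$ accept every $w\in L$ with probability at least $1-\varepsilon^+$, and for every prover and every $w\notin L$, $V$ halts and rejects with probability at least $1-\varepsilon^-$. $\mathrm{IP}^{\mathrm{high}}(\ldots)$ is the class of languages verifiable with some error $\varepsilon<1/2$ by verifiers within the listed resource bounds; $\mathrm{IP}(\ldots)$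 is the class of languages verifiable with arbitrarily low error, i.e. for every $\varepsilon>0$ there is a verifier within the listed bounds verifying $L$ with error at most $\varepsilon$. Bounds (space = work-tape cells, numbers of private/public random bits, time) are worst-case functions of the input length $n$ unless stated to be expected values; an unlisted resource (here, public coins in the right-hand class) is unavailable. *)

theory Defs
  imports Main "HOL-Library.Landau_Symbols"
begin

datatype 'i cell = LEnd | Sym 'i | REnd

text \<open>Events visible to the prover: public coin outcomes, verifier messages,
  prover messages (in chronological order).\<close>
datatype event = PubCoin bool | VMsg nat | PMsg nat

text \<open>States, work-tape symbols and communication symbols are
  natural numbers, restricted to finite alphabets by wf_verifier.  Work blank is 0,
  initial content of the communication cell is 0.
  delta q a x c bp bu = (q', x', c', di, dw): new state, symbol written on work tape,
  symbol written to communication cell (used only in communication states),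
  input head move, work head move.  bp / bu are the private / public coin outcomes
  (only meaningful in private- / public-coin states; otherwise False is supplied).\<close>
record 'i verifier =
  states :: "nat set"
  start  :: nat
  accst  :: nat
  rejst  :: nat
  workA  :: "nat set"
  commA  :: "nat set"
  priv   :: "nat \<Rightarrow> bool"
  pub    :: "nat \<Rightarrow> bool"
  comm   :: "nat \<Rightarrow> bool"
  delta  :: "nat \<Rightarrow> 'i cell \<Rightarrow> nat \<Rightarrow> nat \<Rightarrow> bool \<Rightarrow> bool \<Rightarrow> nat \<times> nat \<times> nat \<times> int \<times> int"

definition wf_verifier :: "'i verifier \<Rightarrow> bool" where
  "wf_verifier V \<longleftrightarrow>
     finite (states V) \<and> finite (workA V) \<and> finite (commA V) \<and>
     start V \<in> states V \<and> accst V \<in> states V \<and> rejst V \<in> states V \<and> accst V \<noteq> rejst V \<and>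
     0 \<in> workA V \<and> 0 \<in> commA V \<and>
     (\<forall>q. pub V q \<longrightarrow> comm V q) \<and>
     (\<forall>q\<in>states V. \<forall>a x c bp bu. x \<in> workA V \<longrightarrow> c \<in> commA V \<longrightarrow>
        (case delta V q a x c bp bu of (q', x', c', di, dw) \<Rightarrow>
           q' \<in> states V \<and> x' \<in> workA V \<and> c' \<in> commA V \<and>
           di \<in> {-1, 0, 1} \<and> dw \<in> {-1, 0, 1}))"

type_synonym 'i prover = "'i list \<Rightarrow> event list \<Rightarrow> nat"

definition valid_prover :: "'i verifier \<Rightarrow> 'i prover \<Rightarrow> bool" where
  "valid_prover V P \<longleftrightarrow> (\<forall>w h. P w h \<in> commA V)"

record config =
  st      :: nat
  ipos    :: nat
  tape    :: "nat \<Rightarrow> nat"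
  wpos    :: nat
  ccell   :: nat
  hist    :: "event list"
  visited :: "nat set"
  nprivb  :: nat
  npubb   :: nat
  nsteps  :: nat

definition input_cell :: "'i list \<Rightarrow> nat \<Rightarrow> 'i cell" where
  "input_cell w i = (if i = 0 then LEnd else if i \<le> length w then Sym (w ! (i - 1)) else REnd)"

definition init_config :: "'i verifier \<Rightarrow> config" where
  "init_config V = \<lparr>st = start V, ipos = 0, tape = (\<lambda>_. 0), wpos = 0, ccell = 0, hist = [],
      visited = {0}, nprivb = 0, npubb = 0, nsteps = 0\<rparr>"

definition halted :: "'i verifier \<Rightarrow> config \<Rightarrow> bool" where
  "halted V c \<longleftrightarrow> st c = accst V \<or> st c = rejst V"

definition step :: "'i verifier \<Rightarrow> 'i prover \<Rightarrow> 'i list \<Rightarrow> config \<Rightarrow> bool \<Rightarrow> bool \<Rightarrow> config" where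
  "step V P w c bp bu =
    (let q = st c;
         (q', x', m, di, dw) = delta V q (input_cell w (ipos c)) (tape c (wpos c)) (ccell c) bp bu;
         h1 = (if pub V q then hist c @ [PubCoin bu] else hist c);
         h2 = (if comm V q then h1 @ [VMsg m] else h1);
         r = P w h2;
         cell' = (if comm V q then r else ccell c);
         h3 = (if comm V q then h2 @ [PMsg r] else h2);
         ip' = nat (min (int (length w) + 1) (int (ipos c) + di));
         wp' = nat (int (wpos c) + dw)
     in \<lparr>st = q', ipos = ip', tape = (tape c)(wpos c := x'), wpos = wp', ccell = cell',
         hist = h3, visited = insert wp' (visited c),
         nprivb = nprivb c + (if priv V q then 1 else 0),
         npubb = npubb c + (if pub V q then 1 else 0),
         nsteps = Suc (nsteps c)\<rparr>)"

definition coins :: "bool \<Rightarrow> bool list" where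
  "coins b = (if b then [False, True] else [False])"

definition outcomes :: "'i verifier \<Rightarrow> config \<Rightarrow> (bool \<times> bool) list" where
  "outcomes V c = List.product (coins (priv V (st c))) (coins (pub V (st c)))"

definition avg_step :: "'i verifier \<Rightarrow> 'i prover \<Rightarrow> 'i list \<Rightarrow> config \<Rightarrow> (config \<Rightarrow> real) \<Rightarrow> real" where
  "avg_step V P w c F =
     sum_list (map (\<lambda>(bp, bu). F (step V P w c bp bu)) (outcomes V c)) / real (length (outcomes V c))"

primrec acc_within :: "'i verifier \<Rightarrow> 'i prover \<Rightarrow> 'i list \<Rightarrow> nat \<Rightarrow> config \<Rightarrow> real" where
  "acc_within V P w 0 c = (if st c = accst V then 1 else 0)"
| "acc_within V P w (Suc k) c =
     (if halted V c then (if st c = accst V then 1 else 0)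
      else avg_step V P w c (acc_within V P w k))"

primrec rej_within :: "'i verifier \<Rightarrow> 'i prover \<Rightarrow> 'i list \<Rightarrow> nat \<Rightarrow> config \<Rightarrow> real" where
  "rej_within V P w 0 c = (if st c = rejst V then 1 else 0)"
| "rej_within V P w (Suc k) c =
     (if halted V c then (if st c = rejst V then 1 else 0)
      else avg_step V P w c (rej_within V P w k))"

definition acc_prob :: "'i verifier \<Rightarrow> 'i prover \<Rightarrow> 'i list \<Rightarrow> real" where
  "acc_prob V P w = (SUP k. acc_within V P w k (init_config V))"

definition rej_prob :: "'i verifier \<Rightarrow> 'i prover \<Rightarrow> 'i list \<Rightarrow> real" where
  "rej_prob V P w = (SUP k. rej_within V P w k (init_config V))"

text \<open>Expected value of a (monotone) resource counter R after min(k, halting time) steps.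
  The expected usage is the limit (supremum) over k.\<close>
primrec exp_within :: "'i verifier \<Rightarrow> 'i prover \<Rightarrow> 'i list \<Rightarrow> (config \<Rightarrow> nat) \<Rightarrow> nat \<Rightarrow> config \<Rightarrow> real" where
  "exp_within V P w R 0 c = real (R c)"
| "exp_within V P w R (Suc k) c =
     (if halted V c then real (R c) else avg_step V P w c (exp_within V P w R k))"

inductive_set reach :: "'i verifier \<Rightarrow> 'i prover \<Rightarrow> 'i list \<Rightarrow> config set"
  for V P w where
  init: "init_config V \<in> reach V P w"
| step: "c \<in> reach V P w \<Longrightarrow> \<not> halted V c \<Longrightarrow> (bp, bu) \<in> set (outcomes V c) \<Longrightarrow>
         step V P w c bp bu \<in> reach V P w"

definition space_used :: "config \<Rightarrow> nat" where "space_used c = card (visited c)"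

definition within_bounds ::
  "bool \<Rightarrow> 'i verifier \<Rightarrow> (nat \<Rightarrow> real) \<Rightarrow> (nat \<Rightarrow> real) \<Rightarrow> (nat \<Rightarrow> real) \<Rightarrow> (nat \<Rightarrow> real) \<Rightarrow> bool" where
  "within_bounds expected V bs bf bg bt \<longleftrightarrow>
     (\<forall>w P. valid_prover V P \<longrightarrow>
        (if expected then
           (\<forall>k. exp_within V P w space_used k (init_config V) \<le> bs (length w) \<and>
                exp_within V P w nprivb k (init_config V) \<le> bf (length w) \<and>
                exp_within V P w npubb k (init_config V) \<le> bg (length w) \<and>
                exp_within V P w nsteps k (init_config V) \<le> bt (length w))
         else
           (\<forall>c\<in>reach V P w. real (space_used c) \<le> bs (length w) \<and>
                real (nprivb c) \<le> bf (length w) \<and>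
                real (npubb c) \<le> bg (length w) \<and>
                real (nsteps c) \<le> bt (length w))))"

definition verifies :: "'i verifier \<Rightarrow> 'i list set \<Rightarrow> real \<Rightarrow> real \<Rightarrow> bool" where
  "verifies V L ep em \<longleftrightarrow> ep < 1/2 \<and> em < 1/2 \<and>
     (\<exists>P. valid_prover V P \<and> (\<forall>w\<in>L. acc_prob V P w \<ge> 1 - ep)) \<and>
     (\<forall>P. valid_prover V P \<longrightarrow> (\<forall>w. w \<notin> L \<longrightarrow> rej_prob V P w \<ge> 1 - em))"

definition admissible ::
  "bool \<Rightarrow> bool \<Rightarrow> 'i verifier \<Rightarrow> (nat \<Rightarrow> nat) \<Rightarrow> (nat \<Rightarrow> nat) \<Rightarrow> (nat \<Rightarrow> nat) \<Rightarrow> (nat \<Rightarrow> nat) \<Rightarrow> bool" where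
  "admissible expected public V s f g t \<longleftrightarrow>
     wf_verifier V \<and> (\<not> public \<longrightarrow> (\<forall>q\<in>states V. \<not> pub V q)) \<and>
     (\<exists>bs bf bg bt. bs \<in> O(\<lambda>n. real (s n)) \<and> bf \<in> O(\<lambda>n. real (f n)) \<and>
        bg \<in> O(\<lambda>n. real (g n)) \<and> bt \<in> O(\<lambda>n. real (t n)) \<and>
        within_bounds expected V bs bf bg bt)"

definition IP_high ::
  "bool \<Rightarrow> bool \<Rightarrow> (nat \<Rightarrow> nat) \<Rightarrow> (nat \<Rightarrow> nat) \<Rightarrow> (nat \<Rightarrow> nat) \<Rightarrow> (nat \<Rightarrow> nat) \<Rightarrow> ('i::finite) list set set" where
  "IP_high expected public s f g t =
     {L. \<exists>V ep em. admissible expected public V s f g t \<and> verifies V L ep em}"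

definition IP ::
  "bool \<Rightarrow> bool \<Rightarrow> (nat \<Rightarrow> nat) \<Rightarrow> (nat \<Rightarrow> nat) \<Rightarrow> (nat \<Rightarrow> nat) \<Rightarrow> (nat \<Rightarrow> nat) \<Rightarrow> ('i::finite) list set set" where
  "IP expected public s f g t =
     {L. \<forall>\<epsilon>>0. \<exists>V ep em. admissible expected public V s f g t \<and> verifies V L ep em \<and>
                         max ep em \<le> \<epsilon>}"

end

theory Submission
  imports Defs
begin

text \<open>A public coin can be replaced by a private one that the verifier announces: since
  every public-coin state communicates, the outcome is appended to the message sent in the
  same step, and the prover learns exactly what it learned before.  One step of \<open>V\<close> becomes
  two steps of the new verifier, the first flipping \<open>V\<close>'s private coin and the second
  flipping the coin that replaces \<open>V\<close>'s public one.  Space is unchanged, time at most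
  doubles, and all random bits become private.  Histories of the two systems translate into
  each other, so every prover of one verifier has a counterpart for the other under which
  each round of \<open>V\<close> is simulated exactly by two rounds; acceptance and rejection
  probabilities, and hence the errors, carry over.\<close>

definition coin_code :: "bool \<Rightarrow> nat" where
  "coin_code b = (if b then 2 else 1)"

lemma coin_code_simps [simp]:
  "(3 * q + coin_code b) div 3 = q"
  "(3 * q + coin_code b) mod 3 = coin_code b"
  "coin_code b mod 3 = coin_code b"
  "coin_code b div 3 = 0"
  "coin_code b \<noteq> 0"
  "coin_code b = 2 \<longleftrightarrow> b"
  "3 * q + coin_code b \<noteq> 3 * x"
  by (auto simp: coin_code_def) presburger+

definition clamp_comm :: "'i verifier \<Rightarrow> nat \<Rightarrow> nat" where
  "clamp_comm V x = (if x \<in> commA V then x else 0)"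

text \<open>State \<open>3 * q\<close> flips \<open>V\<close>'s private coin \<open>b\<close> and moves to \<open>3 * q + coin_code b\<close>.
  That state performs \<open>V\<close>'s step from \<open>q\<close> with private outcome \<open>b\<close>, using a fresh
  private coin as \<open>V\<close>'s public coin and announcing it by sending \<open>3 * m + coin_code\<close> of
  the coin instead of \<open>3 * m\<close>.  Prover replies outside \<open>commA V\<close> are read as \<open>0\<close>.\<close>
definition privatize :: "'i verifier \<Rightarrow> 'i verifier" where
  "privatize V =
    \<lparr>states = (\<lambda>q. 3 * q) ` states V \<union> (\<lambda>(q, b). 3 * q + coin_code b) ` (states V \<times> UNIV),
     start = 3 * start V, accst = 3 * accst V, rejst = 3 * rejst V,
     workA = workA V,
     commA = commA V \<union> {m. m div 3 \<in> commA V},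
     priv = (\<lambda>n. if n mod 3 = 0 then priv V (n div 3) else pub V (n div 3)),
     pub = (\<lambda>_. False),
     comm = (\<lambda>n. n mod 3 \<noteq> 0 \<and> comm V (n div 3)),
     delta = (\<lambda>n a x c b _.
        if n mod 3 = 0 then (3 * (n div 3) + coin_code b, x, 0, 0, 0)
        else (case delta V (n div 3) a x (clamp_comm V c) (n mod 3 = 2) b of
               (q', x', m, di, dw) \<Rightarrow>
                 (3 * q', x', if pub V (n div 3) then 3 * m + coin_code b else 3 * m, di, dw)))\<rparr>"

lemma privatize_simps [simp]:
  "states (privatize V) = (\<lambda>q. 3 * q) ` states V \<union> (\<lambda>(q, b). 3 * q + coin_code b) ` (states V \<times> UNIV)"
  "start (privatize V) = 3 * start V"
  "accst (privatize V) = 3 * accst V"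
  "rejst (privatize V) = 3 * rejst V"
  "workA (privatize V) = workA V"
  "commA (privatize V) = commA V \<union> {m. m div 3 \<in> commA V}"
  "priv (privatize V) n = (if n mod 3 = 0 then priv V (n div 3) else pub V (n div 3))"
  "pub (privatize V) n = False"
  "comm (privatize V) n = (n mod 3 \<noteq> 0 \<and> comm V (n div 3))"
  "delta (privatize V) n a x c b b' =
     (if n mod 3 = 0 then (3 * (n div 3) + coin_code b, x, 0, 0, 0)
      else (case delta V (n div 3) a x (clamp_comm V c) (n mod 3 = 2) b of
             (q', x', m, di, dw) \<Rightarrow>
               (3 * q', x', if pub V (n div 3) then 3 * m + coin_code b else 3 * m, di, dw)))"
  by (simp_all add: privatize_def)

lemma finite_div_preimage:
  assumes "finite A" and "0 < d"
  shows "finite {n :: nat. n div d \<in> A}"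
proof -
  have "{n. n div d \<in> A} \<subseteq> (\<lambda>(m, r). d * m + r) ` (A \<times> {..<d})"
  proof
    fix n assume "n \<in> {n. n div d \<in> A}"
    with \<open>0 < d\<close> have "(n div d, n mod d) \<in> A \<times> {..<d}" by simp
    then show "n \<in> (\<lambda>(m, r). d * m + r) ` (A \<times> {..<d})" by (force intro: rev_image_eqI)
  qed
  moreover have "finite ((\<lambda>(m, r). d * m + r) ` (A \<times> {..<d}))" using assms(1) by simp
  ultimately show ?thesis by (rule finite_subset)
qed

lemma wf_privatize:
  assumes wf: "wf_verifier V"
  shows "wf_verifier (privatize V)"
proof -
  have delta_V: "case delta V q a x c b b' of (q', x', m, di, dw) \<Rightarrow>
      q' \<in> states V \<and> x' \<in> workA V \<and> m \<in> commA V \<and> di \<in> {-1, 0, 1} \<and> dw \<in> {-1, 0, 1}"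
    if "q \<in> states V" "x \<in> workA V" "c \<in> commA V" for q a x c b b'
    using wf that unfolding wf_verifier_def by simp
  have zero: "0 \<in> commA V" using wf by (simp add: wf_verifier_def)
  then have clamp: "clamp_comm V c \<in> commA V" for c by (simp add: clamp_comm_def)
  show ?thesis unfolding wf_verifier_def
  proof (intro conjI ballI allI impI)
    fix n a x c b b'
    assume n: "n \<in> states (privatize V)" and x: "x \<in> workA (privatize V)"
    show "case delta (privatize V) n a x c b b' of (q', x', m, di, dw) \<Rightarrow>
        q' \<in> states (privatize V) \<and> x' \<in> workA (privatize V) \<and> m \<in> commA (privatize V) \<and>
        di \<in> {-1, 0, 1} \<and> dw \<in> {-1, 0, 1}"
    proof (cases "n mod 3 = 0")
      case True
      with n x zero show ?thesis by (auto simp: image_iff)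
    next
      case False
      with n obtain q b0 where n_eq: "n = 3 * q + coin_code b0" and q: "q \<in> states V" by auto
      obtain q' x' m di dw where e: "delta V q a x (clamp_comm V c) b0 b = (q', x', m, di, dw)"
        by (cases "delta V q a x (clamp_comm V c) b0 b")
      from x have "x \<in> workA V" by simp
      from delta_V[where a=a and b=b0 and b'=b, OF q this clamp[of c]] e n_eq
      show ?thesis by (auto simp: image_iff)
    qed
  qed (use wf in \<open>auto simp: wf_verifier_def finite_div_preimage\<close>)
qed

fun decode_hist :: "'i verifier \<Rightarrow> event list \<Rightarrow> event list" where
  "decode_hist V [] = []"
| "decode_hist V (VMsg n # h) =
     (if n mod 3 = 0 then [VMsg (n div 3)] else [PubCoin (n mod 3 = 2), VMsg (n div 3)])
     @ decode_hist V h"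
| "decode_hist V (PMsg r # h) = PMsg (clamp_comm V r) # decode_hist V h"
| "decode_hist V (PubCoin b # h) = PubCoin b # decode_hist V h"

lemma decode_hist_append [simp]: "decode_hist V (h @ h') = decode_hist V h @ decode_hist V h'"
  by (induction V h rule: decode_hist.induct) auto

text \<open>Prover messages are recomputed by \<open>f\<close> rather than copied, because
  \<^const>\<open>decode_hist\<close> keeps only their clamped values.\<close>
fun replay_hist :: "(event list \<Rightarrow> nat) \<Rightarrow> event list \<Rightarrow> event list \<Rightarrow> event list" where
  "replay_hist f acc [] = acc"
| "replay_hist f acc (PubCoin b # VMsg m # h) = replay_hist f (acc @ [VMsg (3 * m + coin_code b)]) h"
| "replay_hist f acc (VMsg m # h) = replay_hist f (acc @ [VMsg (3 * m)]) h"
| "replay_hist f acc (PMsg r # h) = replay_hist f (acc @ [PMsg (f acc)]) h"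
| "replay_hist f acc (PubCoin b # h) = replay_hist f (acc @ [PubCoin b]) h"

definition no_pub_coins :: "event list \<Rightarrow> bool" where
  "no_pub_coins h \<longleftrightarrow> (\<forall>b. PubCoin b \<notin> set h)"

lemma no_pub_coins_simps [simp]:
  "no_pub_coins []"
  "no_pub_coins (e # h) \<longleftrightarrow> (\<forall>b. e \<noteq> PubCoin b) \<and> no_pub_coins h"
  "no_pub_coins (h @ h') \<longleftrightarrow> no_pub_coins h \<and> no_pub_coins h'"
  by (auto simp: no_pub_coins_def)

definition answered_by :: "(event list \<Rightarrow> nat) \<Rightarrow> event list \<Rightarrow> bool" where
  "answered_by f h \<longleftrightarrow> (\<forall>i < length h. \<forall>r. h ! i = PMsg r \<longrightarrow> r = f (take i h))"

lemma answered_by_Cons: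
  "answered_by f (e # h) \<longleftrightarrow> (\<forall>r. e = PMsg r \<longrightarrow> r = f []) \<and> answered_by (\<lambda>h'. f (e # h')) h"
  by (auto simp: answered_by_def nth_Cons' less_Suc_eq_0_disj)

lemma answered_by_snoc [simp]:
  "answered_by f []"
  "answered_by f (h @ [VMsg n]) \<longleftrightarrow> answered_by f h"
  "answered_by f (h @ [PMsg r]) \<longleftrightarrow> answered_by f h \<and> r = f h"
  by (auto simp: answered_by_def nth_append less_Suc_eq)

lemma replay_decode_hist:
  "no_pub_coins h \<Longrightarrow> answered_by (\<lambda>h'. f (acc @ h')) h \<Longrightarrow>
    replay_hist f acc (decode_hist V h) = acc @ h"
proof (induction V h arbitrary: acc rule: decode_hist.induct)
  case (2 V n h)
  have "3 * (n div 3) = n" if "n mod 3 = 0" using that by presburger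
  moreover have "3 * (n div 3) + coin_code (n mod 3 = 2) = n" if "n mod 3 \<noteq> 0"
    using that by (auto simp: coin_code_def) presburger+
  ultimately show ?case using 2 by (auto simp: answered_by_Cons)
qed (auto simp: answered_by_Cons)

section \<open>Simulating one step by two\<close>

text \<open>The last two conjuncts make the coin-flipping step of \<^term>\<open>privatize V\<close> leave
  everything but the state and the counters unchanged.\<close>
definition simulates :: "'i verifier \<Rightarrow> (event list \<Rightarrow> nat) \<Rightarrow> 'i list \<Rightarrow> config \<Rightarrow> config \<Rightarrow> bool" where
  "simulates V f w c c' \<longleftrightarrow>
     st c' = 3 * st c \<and> ipos c' = ipos c \<and> tape c' = tape c \<and> wpos c' = wpos c \<and>
     ccell c = clamp_comm V (ccell c') \<and> hist c = decode_hist V (hist c') \<and>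
     no_pub_coins (hist c') \<and> answered_by f (hist c') \<and> visited c' = visited c \<and>
     nprivb c' = nprivb c + npubb c \<and> npubb c' = 0 \<and> nsteps c' = 2 * nsteps c \<and>
     ipos c \<le> length w + 1 \<and> wpos c \<in> visited c"

definition provers_agree :: "'i verifier \<Rightarrow> 'i prover \<Rightarrow> 'i prover \<Rightarrow> 'i list \<Rightarrow> bool" where
  "provers_agree V P P' w \<longleftrightarrow>
     (\<forall>h. no_pub_coins h \<and> answered_by (P' w) h \<longrightarrow> P w (decode_hist V h) = clamp_comm V (P' w h))"

lemma simulates_init:
  "wf_verifier V \<Longrightarrow> simulates V f w (init_config V) (init_config (privatize V))"
  by (auto simp: simulates_def init_config_def clamp_comm_def wf_verifier_def)

lemma step_coin_state:
  assumes "simulates V f w c c'"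
  shows "step (privatize V) P' w c' b False =
    c'\<lparr>st := 3 * st c + coin_code b, nprivb := nprivb c' + (if priv V (st c) then 1 else 0),
       nsteps := Suc (nsteps c')\<rparr>"
proof -
  from assms have "nat (min (int (length w) + 1) (int (ipos c'))) = ipos c'"
    and "insert (wpos c') (visited c') = visited c'"
    by (auto simp: simulates_def)
  with assms show ?thesis by (simp add: step_def Let_def simulates_def)
qed

lemma step_move_state:
  assumes sim: "simulates V f w c c'"
    and e: "delta V (st c) (input_cell w (ipos c)) (tape c (wpos c)) (ccell c) b b' = (q', x', m, di, dw)"
  defines "h' \<equiv> if comm V (st c)
      then hist c' @ [VMsg (if pub V (st c) then 3 * m + coin_code b' else 3 * m)] else hist c'"
  shows "step (privatize V) P' w (step (privatize V) P' w c' b False) b' False =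
    \<lparr>st = 3 * q', ipos = nat (min (int (length w) + 1) (int (ipos c) + di)),
     tape = (tape c)(wpos c := x'), wpos = nat (int (wpos c) + dw),
     ccell = (if comm V (st c) then P' w h' else ccell c'),
     hist = (if comm V (st c) then h' @ [PMsg (P' w h')] else h'),
     visited = insert (nat (int (wpos c) + dw)) (visited c),
     nprivb = nprivb c' + (if priv V (st c) then 1 else 0) + (if pub V (st c) then 1 else 0),
     npubb = 0, nsteps = Suc (Suc (nsteps c'))\<rparr>"
proof -
  from e sim have "delta (privatize V) (3 * st c + coin_code b) (input_cell w (ipos c))
      (tape c (wpos c)) (ccell c') b' False
    = (3 * q', x', if pub V (st c) then 3 * m + coin_code b' else 3 * m, di, dw)"
    by (simp add: simulates_def)
  with sim show ?thesis
    unfolding step_coin_state[OF sim] by (auto simp: step_def Let_def h'_def simulates_def)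
qed

lemma simulates_two_steps:
  assumes wf: "wf_verifier V" and agree: "provers_agree V P P' w"
    and sim: "simulates V (P' w) w c c'"
  shows "simulates V (P' w) w (step V P w c b b')
           (step (privatize V) P' w (step (privatize V) P' w c' b False) b' False)"
proof -
  have pub_comm: "pub V (st c) \<Longrightarrow> comm V (st c)" and zero: "0 \<in> commA V"
    using wf by (auto simp: wf_verifier_def)
  obtain q' x' m di dw
    where e: "delta V (st c) (input_cell w (ipos c)) (tape c (wpos c)) (ccell c) b b' = (q', x', m, di, dw)"
    by (cases "delta V (st c) (input_cell w (ipos c)) (tape c (wpos c)) (ccell c) b b'")
  define h where "h = (if comm V (st c)
      then (if pub V (st c) then hist c @ [PubCoin b'] else hist c) @ [VMsg m] else hist c)"
  define h' where "h' = (if comm V (st c)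
      then hist c' @ [VMsg (if pub V (st c) then 3 * m + coin_code b' else 3 * m)] else hist c')"
  have h'_ok: "no_pub_coins h'" "answered_by (P' w) h'"
    using sim by (auto simp: h'_def simulates_def)
  have h_eq: "h = decode_hist V h'"
    using sim pub_comm by (auto simp: h_def h'_def simulates_def)
  with agree h'_ok have reply: "P w h = clamp_comm V (P' w h')"
    by (simp add: provers_agree_def)
  have "step V P w c b b' = \<lparr>st = q', ipos = nat (min (int (length w) + 1) (int (ipos c) + di)),
      tape = (tape c)(wpos c := x'), wpos = nat (int (wpos c) + dw),
      ccell = (if comm V (st c) then P w h else ccell c),
      hist = (if comm V (st c) then h @ [PMsg (P w h)] else h),
      visited = insert (nat (int (wpos c) + dw)) (visited c),
      nprivb = nprivb c + (if priv V (st c) then 1 else 0),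
      npubb = npubb c + (if pub V (st c) then 1 else 0),
      nsteps = Suc (nsteps c)\<rparr>"
    using e pub_comm by (auto simp: step_def Let_def h_def)
  then show ?thesis
    unfolding step_move_state[OF sim e, folded h'_def]
    using sim reply h_eq h'_ok zero by (auto simp: simulates_def)
qed

primrec expect_within ::
  "'i verifier \<Rightarrow> 'i prover \<Rightarrow> 'i list \<Rightarrow> (config \<Rightarrow> real) \<Rightarrow> nat \<Rightarrow> config \<Rightarrow> real" where
  "expect_within V P w B 0 c = B c"
| "expect_within V P w B (Suc k) c =
     (if halted V c then B c else avg_step V P w c (expect_within V P w B k))"

lemma acc_within_eq_expect_within:
  "acc_within V P w k = expect_within V P w (\<lambda>c. if st c = accst V then 1 else 0) k"
  by (induction k) (rule ext, simp add: halted_def)+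

lemma rej_within_eq_expect_within:
  "rej_within V P w k = expect_within V P w (\<lambda>c. if st c = rejst V then 1 else 0) k"
  by (induction k) (rule ext, simp add: halted_def)+

lemma exp_within_eq_expect_within:
  "exp_within V P w R k = expect_within V P w (\<lambda>c. real (R c)) k"
  by (induction k) (rule ext, simp)+

lemma avg_step_const [simp]: "avg_step V P w c (\<lambda>_. a) = a"
  by (simp add: avg_step_def case_prod_unfold sum_list_triv outcomes_def coins_def)

lemma avg_step_mono:
  assumes "\<And>b b'. (b, b') \<in> set (outcomes V c) \<Longrightarrow> F (step V P w c b b') \<le> G (step V P w c b b')"
  shows "avg_step V P w c F \<le> avg_step V P w c G"
  unfolding avg_step_def
  by (intro divide_right_mono sum_list_mono) (use assms in auto)

lemma avg_step_add:
  "avg_step V P w c (\<lambda>d. F d + G d) = avg_step V P w c F + avg_step V P w c G"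
  by (simp add: avg_step_def case_prod_unfold sum_list_addf add_divide_distrib)

lemma avg_step_scale: "avg_step V P w c (\<lambda>d. a * F d) = a * avg_step V P w c F"
  by (simp add: avg_step_def case_prod_unfold sum_list_const_mult)

lemma avg_step_nested:
  "avg_step V P w c F =
    (\<Sum>b\<leftarrow>coins (priv V (st c)).
       (\<Sum>b'\<leftarrow>coins (pub V (st c)). F (step V P w c b b')) / real (length (coins (pub V (st c)))))
    / real (length (coins (priv V (st c))))"
  unfolding avg_step_def outcomes_def coins_def
  by (cases "priv V (st c)"; cases "pub V (st c)") (simp_all add: field_simps)

lemma avg_step_no_pub:
  "\<not> pub V (st c) \<Longrightarrow> avg_step V P w c F =
    (\<Sum>b\<leftarrow>coins (priv V (st c)). F (step V P w c b False)) / real (length (coins (priv V (st c))))"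
  by (simp add: avg_step_nested coins_def)

lemma expect_within_const: "expect_within V P w (\<lambda>_. a) k = (\<lambda>_. a)"
  by (induction k) (rule ext, simp)+

lemma expect_within_add:
  "expect_within V P w (\<lambda>c. B c + B' c) k =
    (\<lambda>c. expect_within V P w B k c + expect_within V P w B' k c)"
  by (induction k) (rule ext, simp add: avg_step_add)+

lemma expect_within_scale:
  "expect_within V P w (\<lambda>c. a * B c) k = (\<lambda>c. a * expect_within V P w B k c)"
  by (induction k) (rule ext, simp add: avg_step_scale)+

lemma expect_within_le:
  assumes "\<And>c. B c \<le> a"
  shows "expect_within V P w B k c \<le> a"
proof (induction k arbitrary: c)
  case (Suc k)
  have "avg_step V P w c (expect_within V P w B k) \<le> avg_step V P w c (\<lambda>_. a)"
    by (rule avg_step_mono) (rule Suc.IH)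
  then show ?case using assms by simp
qed (simp add: assms)

lemma expect_within_mono:
  assumes B: "\<And>c b b'. c \<in> reach V P w \<Longrightarrow> B c \<le> B (step V P w c b b')"
    and c: "c \<in> reach V P w" and "k \<le> k'"
  shows "expect_within V P w B k c \<le> expect_within V P w B k' c"
proof -
  have "expect_within V P w B k c \<le> expect_within V P w B (Suc k) c" if "c \<in> reach V P w" for k c
    using that
  proof (induction k arbitrary: c)
    case 0
    have "expect_within V P w B 0 = B" by (rule ext) simp
    moreover from 0 have "avg_step V P w c (\<lambda>_. B c) \<le> avg_step V P w c B"
      by (intro avg_step_mono B)
    ultimately show ?case by simp
  next
    case (Suc k)
    show ?case
    proof (cases "halted V c")
      case False
      have "avg_step V P w c (expect_within V P w B k)
              \<le> avg_step V P w c (expect_within V P w B (Suc k))"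
        by (rule avg_step_mono, rule Suc.IH, rule reach.step) (use Suc.prems False in auto)
      with False show ?thesis by simp
    qed simp
  qed
  with c \<open>k \<le> k'\<close> show ?thesis
    using lift_Suc_mono_le[of "\<lambda>k. expect_within V P w B k c"] by blast
qed

lemma expect_within_privatize:
  assumes wf: "wf_verifier V" and agree: "provers_agree V P P' w"
    and B: "\<And>c c'. simulates V (P' w) w c c' \<Longrightarrow> B' c' = B c"
  shows "simulates V (P' w) w c c' \<Longrightarrow>
    expect_within (privatize V) P' w B' (2 * k) c' = expect_within V P w B k c"
proof (induction k arbitrary: c c')
  case 0
  then show ?case by (simp add: B)
next
  case (Suc k)
  let ?coin_step = "\<lambda>b. step (privatize V) P' w c' b False"
  have st: "st c' = 3 * st c" and st_coin: "st (?coin_step b) = 3 * st c + coin_code b" for b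
    using Suc.prems step_coin_state[OF Suc.prems] by (simp_all add: simulates_def)
  have coin: "expect_within (privatize V) P' w B' (Suc (2 * k)) (?coin_step b) =
      (\<Sum>b'\<leftarrow>coins (pub V (st c)). expect_within V P w B k (step V P w c b b'))
      / real (length (coins (pub V (st c))))" for b
    using st_coin Suc.IH[OF simulates_two_steps[OF wf agree Suc.prems]]
    by (simp add: avg_step_no_pub halted_def)
  have two_suc: "2 * Suc k = Suc (Suc (2 * k))" by simp
  show ?case
  proof (cases "halted V c")
    case True
    with Suc.prems st show ?thesis by (simp add: two_suc halted_def B)
  next
    case False
    with st have "expect_within (privatize V) P' w B' (2 * Suc k) c' =
        avg_step (privatize V) P' w c' (expect_within (privatize V) P' w B' (Suc (2 * k)))"
      by (simp add: two_suc halted_def)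
    also have "\<dots> = (\<Sum>b\<leftarrow>coins (priv V (st c)).
          expect_within (privatize V) P' w B' (Suc (2 * k)) (?coin_step b))
        / real (length (coins (priv V (st c))))"
      by (simp add: avg_step_no_pub st)
    also have "\<dots> = avg_step V P w c (expect_within V P w B k)"
      unfolding coin avg_step_nested ..
    also have "\<dots> = expect_within V P w B (Suc k) c"
      using False by simp
    finally show ?thesis .
  qed
qed

lemma SUP_expect_within_le_privatize:
  assumes wf: "wf_verifier V" and agree: "provers_agree V P P' w"
    and B: "\<And>c c'. simulates V (P' w) w c c' \<Longrightarrow> B' c' = B c" and B'_le: "\<And>c. B' c \<le> 1"
  shows "(SUP k. expect_within V P w B k (init_config V))
           \<le> (SUP k. expect_within (privatize V) P' w B' k (init_config (privatize V)))"
proof (rule cSUP_mono)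
  show "bdd_above (range (\<lambda>k. expect_within (privatize V) P' w B' k (init_config (privatize V))))"
    using B'_le by (intro bdd_aboveI2 expect_within_le)
  fix k
  have "expect_within V P w B k (init_config V) =
      expect_within (privatize V) P' w B' (2 * k) (init_config (privatize V))"
    using expect_within_privatize[OF wf agree B simulates_init[OF wf]] by simp
  then show "\<exists>m\<in>UNIV. expect_within V P w B k (init_config V)
      \<le> expect_within (privatize V) P' w B' m (init_config (privatize V))" by auto
qed simp

lemma acc_prob_le_privatize:
  "wf_verifier V \<Longrightarrow> provers_agree V P P' w \<Longrightarrow> acc_prob V P w \<le> acc_prob (privatize V) P' w"
  unfolding acc_prob_def acc_within_eq_expect_within
  by (rule SUP_expect_within_le_privatize) (auto simp: simulates_def)

lemma rej_prob_le_privatize: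
  "wf_verifier V \<Longrightarrow> provers_agree V P P' w \<Longrightarrow> rej_prob V P w \<le> rej_prob (privatize V) P' w"
  unfolding rej_prob_def rej_within_eq_expect_within
  by (rule SUP_expect_within_le_privatize) (auto simp: simulates_def)

definition lift_prover :: "'i verifier \<Rightarrow> 'i prover \<Rightarrow> 'i prover" where
  "lift_prover V P w h = P w (decode_hist V h)"

definition lower_prover :: "'i verifier \<Rightarrow> 'i prover \<Rightarrow> 'i prover" where
  "lower_prover V P' w h = clamp_comm V (P' w (replay_hist (P' w) [] h))"

lemma valid_lift_prover: "valid_prover V P \<Longrightarrow> valid_prover (privatize V) (lift_prover V P)"
  by (simp add: valid_prover_def lift_prover_def)

lemma provers_agree_lift: "valid_prover V P \<Longrightarrow> provers_agree V P (lift_prover V P) w"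
  by (simp add: provers_agree_def valid_prover_def lift_prover_def clamp_comm_def)

lemma valid_lower_prover: "wf_verifier V \<Longrightarrow> valid_prover V (lower_prover V P')"
  by (simp add: valid_prover_def lower_prover_def clamp_comm_def wf_verifier_def)

lemma provers_agree_lower: "provers_agree V (lower_prover V P') P' w"
  unfolding provers_agree_def lower_prover_def
  by (auto simp: replay_decode_hist[where acc = "[]", simplified])

lemma verifies_privatize:
  assumes wf: "wf_verifier V" and verifies: "verifies V L ep em"
  shows "verifies (privatize V) L ep em"
proof -
  from verifies obtain P where P: "valid_prover V P" "\<forall>w\<in>L. acc_prob V P w \<ge> 1 - ep"
    by (auto simp: verifies_def)
  have "acc_prob (privatize V) (lift_prover V P) w \<ge> 1 - ep" if "w \<in> L" for w
    using acc_prob_le_privatize[OF wf provers_agree_lift[OF P(1)], of w] P(2) that by force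
  moreover have "rej_prob (privatize V) P' w \<ge> 1 - em" if "w \<notin> L" for P' w
  proof -
    have "1 - em \<le> rej_prob V (lower_prover V P') w"
      using verifies valid_lower_prover[OF wf] that unfolding verifies_def by blast
    also have "\<dots> \<le> rej_prob (privatize V) P' w"
      by (rule rej_prob_le_privatize[OF wf provers_agree_lower])
    finally show ?thesis .
  qed
  ultimately show ?thesis
    using verifies valid_lift_prover[OF P(1)] unfolding verifies_def by blast
qed

section \<open>Resource bounds\<close>

lemma step_counters:
  "nprivb (step V P w c b b') = nprivb c + (if priv V (st c) then 1 else 0)"
  "npubb (step V P w c b b') = npubb c + (if pub V (st c) then 1 else 0)"
  "nsteps (step V P w c b b') = Suc (nsteps c)"
  by (simp_all add: step_def Let_def split: prod.split)

lemma visited_step: "\<exists>x. visited (step V P w c b b') = insert x (visited c)"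
  by (auto simp: step_def Let_def split: prod.split)

lemma finite_visited_reach: "c \<in> reach V P w \<Longrightarrow> finite (visited c)"
proof (induction rule: reach.induct)
  case (step c b b')
  then show ?case using visited_step[of V P w c b b'] by auto
qed (simp add: init_config_def)

lemma space_used_step_mono: "c \<in> reach V P w \<Longrightarrow> space_used c \<le> space_used (step V P w c b b')"
  using finite_visited_reach visited_step[of V P w c b b']
  by (auto simp: space_used_def card_insert_le)

lemma reach_privatize:
  assumes wf: "wf_verifier V" and agree: "provers_agree V P P' w"
    and "c' \<in> reach (privatize V) P' w"
  shows "(\<exists>c\<in>reach V P w. simulates V (P' w) w c c') \<or>
    (\<exists>c\<in>reach V P w. \<exists>d b. \<not> halted V c \<and> b \<in> set (coins (priv V (st c))) \<and>
       simulates V (P' w) w c d \<and> c' = step (privatize V) P' w d b False)"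
  using assms(3)
proof (induction rule: reach.induct)
  case init
  then show ?case using simulates_init[OF wf] reach.init by blast
next
  case (step c' b b')
  from step.IH show ?case
  proof (elim disjE bexE exE conjE)
    fix c assume c: "c \<in> reach V P w" and sim: "simulates V (P' w) w c c'"
    then have "st c' = 3 * st c" by (simp add: simulates_def)
    with step.hyps(2,3) have "\<not> halted V c" "b \<in> set (coins (priv V (st c)))" "b' = False"
      by (auto simp: halted_def outcomes_def coins_def)
    with c sim show ?thesis by blast
  next
    fix c d b0 assume c: "c \<in> reach V P w" and not_halted: "\<not> halted V c"
      and b0: "b0 \<in> set (coins (priv V (st c)))" and sim: "simulates V (P' w) w c d"
      and c'_eq: "c' = step (privatize V) P' w d b0 False"
    then have "st c' = 3 * st c + coin_code b0" using step_coin_state[OF sim] by simp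
    with step.hyps(3) have b: "b \<in> set (coins (pub V (st c)))" and b': "b' = False"
      by (auto simp: outcomes_def coins_def)
    from b0 b have "(b0, b) \<in> set (outcomes V c)" by (simp add: outcomes_def)
    with c not_halted have "step V P w c b0 b \<in> reach V P w" by (rule reach.step)
    moreover have "simulates V (P' w) w (step V P w c b0 b) (step (privatize V) P' w c' b b')"
      using simulates_two_steps[OF wf agree sim] c'_eq b' by simp
    ultimately show ?thesis by blast
  qed
qed

lemma reach_privatize_counters:
  assumes wf: "wf_verifier V" and agree: "provers_agree V P P' w"
    and "c' \<in> reach (privatize V) P' w"
  obtains c where "c \<in> reach V P w" "space_used c' \<le> space_used c"
    "nprivb c' \<le> nprivb c + npubb c" "npubb c' = 0" "nsteps c' \<le> 2 * nsteps c"
  using reach_privatize[OF assms]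
proof (elim disjE bexE exE conjE)
  fix c assume "c \<in> reach V P w" and "simulates V (P' w) w c c'"
  then show thesis by (intro that) (auto simp: simulates_def space_used_def)
next
  fix c d b assume c: "c \<in> reach V P w" and not_halted: "\<not> halted V c"
    and sim: "simulates V (P' w) w c d" and c'_eq: "c' = step (privatize V) P' w d b False"
  have "(False, False) \<in> set (outcomes V c)" by (simp add: outcomes_def coins_def)
  with c not_halted have next_c: "step V P w c False False \<in> reach V P w" by (rule reach.step)
  from c'_eq have c'_counters: "visited c' = visited c"
      "nprivb c' = nprivb c + npubb c + (if priv V (st c) then 1 else 0)"
      "npubb c' = 0" "nsteps c' = Suc (2 * nsteps c)"
    using sim by (simp_all add: step_coin_state[OF sim] simulates_def)
  from next_c show thesis
  proof (rule that)
    show "space_used c' \<le> space_used (step V P w c False False)"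
      using space_used_step_mono[OF c] c'_counters by (simp add: space_used_def)
  qed (simp_all add: c'_counters step_counters)
qed

lemma exp_within_privatize_le:
  assumes wf: "wf_verifier V" and agree: "provers_agree V P P' w"
    and mono: "\<And>c b b'. c \<in> reach (privatize V) P' w \<Longrightarrow> R c \<le> R (step (privatize V) P' w c b b')"
    and B: "\<And>c c'. simulates V (P' w) w c c' \<Longrightarrow> real (R c') = B c"
  shows "exp_within (privatize V) P' w R k (init_config (privatize V))
           \<le> expect_within V P w B k (init_config V)"
proof -
  have "exp_within (privatize V) P' w R k (init_config (privatize V))
          \<le> exp_within (privatize V) P' w R (2 * k) (init_config (privatize V))"
    unfolding exp_within_eq_expect_within
    by (rule expect_within_mono) (use mono reach.init in auto)
  also have "\<dots> = expect_within V P w B k (init_config V)"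
    unfolding exp_within_eq_expect_within
    by (rule expect_within_privatize[OF wf agree B simulates_init[OF wf]])
  finally show ?thesis .
qed

lemma within_bounds_worst_case_privatize:
  fixes V :: "'i verifier"
  assumes wf: "wf_verifier V" and bounds: "within_bounds False V bs bf bg bt"
  shows "within_bounds False (privatize V) bs (\<lambda>n. bf n + bg n) (\<lambda>_. 0) (\<lambda>n. 2 * bt n)"
  unfolding within_bounds_def if_False
proof (intro allI impI ballI)
  fix w P' c' assume "c' \<in> reach (privatize V) P' w"
  then obtain c where c: "c \<in> reach V (lower_prover V P') w" and "space_used c' \<le> space_used c"
    "nprivb c' \<le> nprivb c + npubb c" "npubb c' = 0" "nsteps c' \<le> 2 * nsteps c"
    by (rule reach_privatize_counters[OF wf provers_agree_lower])
  then have "real (space_used c') \<le> real (space_used c)"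
    "real (nprivb c') \<le> real (nprivb c) + real (npubb c)" "real (npubb c') = 0"
    "real (nsteps c') \<le> 2 * real (nsteps c)"
    by simp_all
  with bounds valid_lower_prover[OF wf] c
  show "real (space_used c') \<le> bs (length w) \<and> real (nprivb c') \<le> bf (length w) + bg (length w) \<and>
      real (npubb c') \<le> 0 \<and> real (nsteps c') \<le> 2 * bt (length w)"
    unfolding within_bounds_def by fastforce
qed

lemma within_bounds_expected_privatize:
  fixes V :: "'i verifier"
  assumes wf: "wf_verifier V" and bounds: "within_bounds True V bs bf bg bt"
  shows "within_bounds True (privatize V) bs (\<lambda>n. bf n + bg n) (\<lambda>_. 0) (\<lambda>n. 2 * bt n)"
  unfolding within_bounds_def if_True
proof (intro allI impI)
  fix w :: "'i list" and P' k
  let ?P = "lower_prover V P'" and ?n = "length w"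
  note le = exp_within_privatize_le[OF wf provers_agree_lower, where k = k]
  have "exp_within (privatize V) P' w space_used k (init_config (privatize V))
          \<le> expect_within V ?P w (\<lambda>c. real (space_used c)) k (init_config V)"
    by (rule le, erule space_used_step_mono) (simp add: simulates_def space_used_def)
  moreover have "exp_within (privatize V) P' w nprivb k (init_config (privatize V))
          \<le> expect_within V ?P w (\<lambda>c. real (nprivb c) + real (npubb c)) k (init_config V)"
    by (rule le) (simp_all add: step_counters simulates_def)
  moreover have "exp_within (privatize V) P' w npubb k (init_config (privatize V))
          \<le> expect_within V ?P w (\<lambda>_. 0) k (init_config V)"
    by (rule le) (simp_all add: step_counters simulates_def)
  moreover have "exp_within (privatize V) P' w nsteps k (init_config (privatize V))
          \<le> expect_within V ?P w (\<lambda>c. 2 * real (nsteps c)) k (init_config V)"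
    by (rule le) (simp_all add: step_counters simulates_def)
  moreover have "exp_within V ?P w space_used k (init_config V) \<le> bs ?n \<and>
      exp_within V ?P w nprivb k (init_config V) \<le> bf ?n \<and>
      exp_within V ?P w npubb k (init_config V) \<le> bg ?n \<and>
      exp_within V ?P w nsteps k (init_config V) \<le> bt ?n"
    using bounds valid_lower_prover[OF wf] unfolding within_bounds_def by simp
  ultimately show "exp_within (privatize V) P' w space_used k (init_config (privatize V)) \<le> bs ?n \<and>
      exp_within (privatize V) P' w nprivb k (init_config (privatize V)) \<le> bf ?n + bg ?n \<and>
      exp_within (privatize V) P' w npubb k (init_config (privatize V)) \<le> 0 \<and>
      exp_within (privatize V) P' w nsteps k (init_config (privatize V)) \<le> 2 * bt ?n"
    by (simp add: expect_within_add expect_within_scale expect_within_const exp_within_eq_expect_within)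
qed

lemma within_bounds_privatize:
  "wf_verifier V \<Longrightarrow> within_bounds e V bs bf bg bt \<Longrightarrow>
    within_bounds e (privatize V) bs (\<lambda>n. bf n + bg n) (\<lambda>_. 0) (\<lambda>n. 2 * bt n)"
  by (cases e) (simp_all add: within_bounds_worst_case_privatize within_bounds_expected_privatize)

lemma admissible_privatize:
  assumes "admissible e True V s f g t"
  shows "admissible e False (privatize V) s (\<lambda>n. f n + g n) (\<lambda>_. 0) t"
proof -
  have wf: "wf_verifier V" using assms by (simp add: admissible_def)
  obtain bs bf bg bt where bs: "bs \<in> O(\<lambda>n. real (s n))" and bf: "bf \<in> O(\<lambda>n. real (f n))"
      and bg: "bg \<in> O(\<lambda>n. real (g n))" and bt: "bt \<in> O(\<lambda>n. real (t n))"
      and bounds: "within_bounds e V bs bf bg bt"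
    using assms unfolding admissible_def by blast
  have "(\<lambda>n. real (f n)) \<in> O(\<lambda>n. real (f n + g n))" "(\<lambda>n. real (g n)) \<in> O(\<lambda>n. real (f n + g n))"
    by (intro bigoI[where c = 1]; simp)+
  with bf bg have "(\<lambda>n. bf n + bg n) \<in> O(\<lambda>n. real (f n + g n))"
    by (intro sum_in_bigo) (auto intro: landau_o.big_trans)
  moreover from bt have "(\<lambda>n. 2 * bt n) \<in> O(\<lambda>n. real (t n))" by simp
  moreover have "(\<lambda>_. 0) \<in> O(\<lambda>n. real ((\<lambda>_. 0 :: nat) n))" by simp
  ultimately show ?thesis
    unfolding admissible_def
    using wf_privatize[OF wf] within_bounds_privatize[OF wf bounds] bs
    by (simp only: privatize_simps(8) not_False_eq_True ball_simps simp_thms) blast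
qed

theorem lemma2:
  fixes s f g t :: "nat \<Rightarrow> nat"
  shows "\<forall>expected.
           (IP expected True s f g t
              \<subseteq> (IP expected False s (\<lambda>n. f n + g n) (\<lambda>_. 0) t :: ('i::finite) list set set)) \<and>
           (IP_high expected True s f g t
              \<subseteq> (IP_high expected False s (\<lambda>n. f n + g n) (\<lambda>_. 0) t :: ('i::finite) list set set))"
proof -
  have privatized: "admissible e False (privatize V) s (\<lambda>n. f n + g n) (\<lambda>_. 0) t \<and>
      verifies (privatize V) L ep em"
    if "admissible e True V s f g t" "verifies V L ep em" for e and V :: "'i verifier" and L ep em
  proof -
    from that(1) have "wf_verifier V" by (simp add: admissible_def)
    with that show ?thesis by (simp add: admissible_privatize verifies_privatize)
  qed
  show ?thesis
    unfolding IP_def IP_high_def by (blast dest: privatized)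
qed

end
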